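(* Let $l$ be a positive integer and let $\alpha,\beta,\gamma,\alpha',\beta',\gamma'$ be real numbers such that $\alpha\ge 0$, $\alpha'\ge 0$, $\beta\ge 0$, $-\alpha'\le \beta'\le 0$, $\alpha+\beta+\gamma\ge 0$ and $\alpha'+\beta'+\gamma'\ge 0$. Let $T(n,k)$ be defined by $T(1,1)=1$, $T(n,k)=0$ unless $1\le k\le n$, and $$T(n,k)=(\alpha n+\beta k+\gamma)^l\,T(n-1,k)+(\alpha' n+\beta' k+\gamma')^l\,T(n-1,k-1)\qquad(n\ge 2,\ 1\le k\le n).$$ Then for every $n\ge 1$ the sequence $(T(n,k))_k$ is log-concave in $k$, i.e. $T(n,k)^2\ge T(n,k-1)T(n,k+1)$ for all $k$. *)

theory Defs
  imports Complex_Main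
begin

fun Tarr :: "nat \<Rightarrow> real \<Rightarrow> real \<Rightarrow> real \<Rightarrow> real \<Rightarrow> real \<Rightarrow> real \<Rightarrow> nat \<Rightarrow> int \<Rightarrow> real" where
  "Tarr l a b c a' b' c' 0 k = 0"
| "Tarr l a b c a' b' c' (Suc 0) k = (if k = 1 then 1 else 0)"
| "Tarr l a b c a' b' c' (Suc (Suc m)) k =
     (if 1 \<le> k \<and> k \<le> int (Suc (Suc m)) then
        (a * real (Suc (Suc m)) + b * real_of_int k + c) ^ l * Tarr l a b c a' b' c' (Suc m) k
      + (a' * real (Suc (Suc m)) + b' * real_of_int k + c') ^ l * Tarr l a b c a' b' c' (Suc m) (k - 1)
      else 0)"

end

theory Submission
  imports Defs
begin

text \<open>Write \<open>X n k\<close> and \<open>Y n k\<close> for the two weights \<open>(a n + b k + c)\<^sup>l\<close> and \<open>(a' n + b' k + c')\<^sup>l\<close>.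
  When \<open>a + b + c\<close> and \<open>a' + b' + c'\<close> are strictly positive, all weights and all entries
  \<open>T(n,k)\<close>, \<open>1 \<le> k \<le> n\<close>, are positive, and one proves by induction on \<open>n\<close> the weighted
  log-concavity
  \<open>Y(n+1,k) X(n+1,k+1) T(n,k-1) T(n,k+1) \<le> Y(n+1,k+1) X(n+1,k) T(n,k)\<^sup>2\<close>.
  The induction step only uses that the weights satisfy the two quadrilateral inequalities
  \<open>X(n+1,k+1) X(n,k-1) \<le> X(n+1,k) X(n,k)\<close> and \<open>Y(n+1,k) Y(n,k+1) \<le> Y(n+1,k+1) Y(n,k)\<close>.
  Since \<open>X\<close> increases and \<open>Y\<close> decreases in \<open>k\<close>, the weighted inequality implies
  log-concavity. The boundary case of vanishing sums follows by perturbing \<open>c\<close> and \<open>c'\<close>,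
  as \<open>T(n,k)\<close> depends continuously on them.\<close>

lemma Tarr_eq_0:
  assumes "k < 1 \<or> int n < k"
  shows "Tarr l a b c a' b' c' n k = 0"
  using assms by (induction l a b c a' b' c' n k rule: Tarr.induct) auto

lemma Tarr_neq_0_imp_bounds:
  "Tarr l a b c a' b' c' n k \<noteq> 0 \<Longrightarrow> 1 \<le> k \<and> k \<le> int n"
  by (metis Tarr_eq_0 not_less)

definition weight :: "nat \<Rightarrow> real \<Rightarrow> real \<Rightarrow> real \<Rightarrow> nat \<Rightarrow> int \<Rightarrow> real" where
  "weight l a b c n k = (a * real n + b * real_of_int k + c) ^ l"

lemma Tarr_Suc:
  assumes "1 \<le> m"
  shows "Tarr l a b c a' b' c' (Suc m) k =
           weight l a b c (Suc m) k * Tarr l a b c a' b' c' m k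
         + weight l a' b' c' (Suc m) k * Tarr l a b c a' b' c' m (k - 1)"
proof -
  obtain m' where m: "m = Suc m'" using assms by (cases m) auto
  show ?thesis
  proof (cases "1 \<le> k \<and> k \<le> int (Suc m)")
    case True
    then show ?thesis by (simp add: m weight_def)
  next
    case False
    then have "k < 1 \<or> int m < k" "k - 1 < 1 \<or> int m < k - 1" "k < 1 \<or> int (Suc m) < k"
      by auto
    then show ?thesis by (simp add: Tarr_eq_0)
  qed
qed

lemma affine_ge_at_one:
  fixes a b c :: real
  assumes "0 \<le> a" "0 \<le> b" "1 \<le> n" "1 \<le> k"
  shows "a + b + c \<le> a * real n + b * real_of_int k + c"
proof -
  have "a * 1 \<le> a * real n" "b * 1 \<le> b * real_of_int k"
    using assms by (intro mult_left_mono; simp)+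
  then show ?thesis by simp
qed

lemma affine_ge_at_one_diagonal:
  fixes a b c :: real
  assumes "0 \<le> a + b" "b \<le> 0" "1 \<le> n" "k \<le> int n"
  shows "a + b + c \<le> a * real n + b * real_of_int k + c"
proof -
  have "b * real n \<le> b * real_of_int k"
    using assms by (intro mult_left_mono_neg) simp_all
  moreover have "(a + b) * 1 \<le> (a + b) * real n"
    using assms by (intro mult_left_mono) simp_all
  ultimately show ?thesis by (simp add: algebra_simps)
qed

lemma power_mult_le_power_mult:
  fixes u v w z :: "'a :: linordered_semidom"
  assumes "0 \<le> u * v" "u * v \<le> w * z"
  shows "u ^ l * v ^ l \<le> w ^ l * z ^ l"
  using power_mono[OF assms(2,1), of l] by (simp add: power_mult_distrib)

lemma weight_quadrilateral_nonneg_b: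
  assumes "0 \<le> a" "0 \<le> b" "0 \<le> a * real n + b * real_of_int (k - 1) + c"
  shows "weight l a b c (Suc n) (k + 1) * weight l a b c n (k - 1)
           \<le> weight l a b c (Suc n) k * weight l a b c n k"
proof -
  define x where "x = a * real n + b * real_of_int k + c"
  have "0 \<le> x - b"
    using assms by (simp add: x_def algebra_simps)
  then have "0 \<le> (x + a + b) * (x - b)"
    using assms by simp
  moreover have "(x + a + b) * (x - b) \<le> (x + a) * x"
    using assms by (simp add: algebra_simps)
  ultimately show ?thesis
    unfolding weight_def by (simp add: x_def algebra_simps power_mult_le_power_mult)
qed

lemma weight_quadrilateral_nonpos_b:
  assumes "0 \<le> a" "b \<le> 0" "0 \<le> a * real n + b * real_of_int (k + 1) + c"
  shows "weight l a b c (Suc n) k * weight l a b c n (k + 1)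
           \<le> weight l a b c (Suc n) (k + 1) * weight l a b c n k"
proof -
  define y where "y = a * real n + b * real_of_int k + c"
  have "0 \<le> y + b"
    using assms by (simp add: y_def algebra_simps)
  then have "0 \<le> (y + a) * (y + b)"
    using assms by simp
  moreover have "(y + a) * (y + b) \<le> (y + a + b) * y"
    using assms by (simp add: algebra_simps mult_nonneg_nonpos)
  ultimately show ?thesis
    unfolding weight_def by (simp add: y_def algebra_simps power_mult_le_power_mult)
qed

lemma weight_mono_nonneg_b:
  assumes "0 \<le> b" "0 \<le> a * real n + b * real_of_int k + c"
  shows "weight l a b c n k \<le> weight l a b c n (k + 1)"
  unfolding weight_def using assms by (intro power_mono) (simp_all add: algebra_simps)

lemma weight_antimono_nonpos_b:
  assumes "b \<le> 0" "0 \<le> a * real n + b * real_of_int (k + 1) + c"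
  shows "weight l a b c n (k + 1) \<le> weight l a b c n k"
  unfolding weight_def using assms by (intro power_mono) (simp_all add: algebra_simps)

text \<open>In the next two lemmas \<open>t\<^sub>0, ..., t\<^sub>3\<close> stand for \<open>T(m,k-2), ..., T(m,k+1)\<close>, \<open>x\<^sub>i\<close> and \<open>y\<^sub>i\<close>
  for \<open>X(m+1,k-1+i)\<close> and \<open>Y(m+1,k-1+i)\<close>, the primed weights for those of row \<open>m+2\<close>, and
  \<open>s\<^sub>0, s\<^sub>1, s\<^sub>2\<close> for \<open>T(m+1,k-1), T(m+1,k), T(m+1,k+1)\<close>.\<close>

lemma next_row_product_le:
  fixes t\<^sub>0 t\<^sub>1 t\<^sub>2 t\<^sub>3 x\<^sub>0 x\<^sub>1 x\<^sub>2 y\<^sub>0 y\<^sub>1 y\<^sub>2 :: real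
  assumes pos: "0 < t\<^sub>1" "0 < t\<^sub>2"
    and nonneg: "0 \<le> t\<^sub>0" "0 \<le> t\<^sub>3" "0 \<le> x\<^sub>0" "0 \<le> x\<^sub>1" "0 \<le> x\<^sub>2" "0 \<le> y\<^sub>0" "0 \<le> y\<^sub>1" "0 \<le> y\<^sub>2"
    and lc\<^sub>1: "y\<^sub>0 * x\<^sub>1 * (t\<^sub>0 * t\<^sub>2) \<le> y\<^sub>1 * x\<^sub>0 * t\<^sub>1\<^sup>2"
    and lc\<^sub>2: "y\<^sub>1 * x\<^sub>2 * (t\<^sub>1 * t\<^sub>3) \<le> y\<^sub>2 * x\<^sub>1 * t\<^sub>2\<^sup>2"
  defines "s\<^sub>0 \<equiv> x\<^sub>0 * t\<^sub>1 + y\<^sub>0 * t\<^sub>0" and "s\<^sub>1 \<equiv> x\<^sub>1 * t\<^sub>2 + y\<^sub>1 * t\<^sub>1" and "s\<^sub>2 \<equiv> x\<^sub>2 * t\<^sub>3 + y\<^sub>2 * t\<^sub>2"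
  shows "x\<^sub>1 * y\<^sub>1 * (s\<^sub>0 * s\<^sub>2) \<le> x\<^sub>0 * y\<^sub>2 * s\<^sub>1\<^sup>2"
proof -
  have left: "x\<^sub>1 * t\<^sub>2 * s\<^sub>0 \<le> x\<^sub>0 * t\<^sub>1 * s\<^sub>1"
    using lc\<^sub>1 by (simp add: s\<^sub>0_def s\<^sub>1_def algebra_simps power2_eq_square)
  have right: "y\<^sub>1 * t\<^sub>1 * s\<^sub>2 \<le> y\<^sub>2 * t\<^sub>2 * s\<^sub>1"
    using lc\<^sub>2 by (simp add: s\<^sub>1_def s\<^sub>2_def algebra_simps power2_eq_square)
  have "(t\<^sub>1 * t\<^sub>2) * (x\<^sub>1 * y\<^sub>1 * (s\<^sub>0 * s\<^sub>2)) = (x\<^sub>1 * t\<^sub>2 * s\<^sub>0) * (y\<^sub>1 * t\<^sub>1 * s\<^sub>2)"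
    by (simp add: algebra_simps)
  also have "\<dots> \<le> (x\<^sub>0 * t\<^sub>1 * s\<^sub>1) * (y\<^sub>2 * t\<^sub>2 * s\<^sub>1)"
    using pos nonneg by (intro mult_mono[OF left right]) (simp_all add: s\<^sub>1_def s\<^sub>2_def)
  also have "\<dots> = (t\<^sub>1 * t\<^sub>2) * (x\<^sub>0 * y\<^sub>2 * s\<^sub>1\<^sup>2)"
    by (simp add: algebra_simps power2_eq_square)
  finally show ?thesis
    using pos by (simp add: mult_le_cancel_left_pos)
qed

lemma next_row_weighted_lc:
  fixes t\<^sub>0 t\<^sub>1 t\<^sub>2 t\<^sub>3 x\<^sub>0 x\<^sub>1 x\<^sub>2 y\<^sub>0 y\<^sub>1 y\<^sub>2 x\<^sub>1' x\<^sub>2' y\<^sub>1' y\<^sub>2' :: real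
  assumes pos: "0 < t\<^sub>1" "0 < t\<^sub>2" "0 < x\<^sub>1" "0 < y\<^sub>1"
    and nonneg: "0 \<le> t\<^sub>0" "0 \<le> t\<^sub>3" "0 \<le> x\<^sub>0" "0 \<le> x\<^sub>2" "0 \<le> y\<^sub>0" "0 \<le> y\<^sub>2"
      "0 \<le> x\<^sub>1'" "0 \<le> x\<^sub>2'" "0 \<le> y\<^sub>1'" "0 \<le> y\<^sub>2'"
    and lc\<^sub>1: "y\<^sub>0 * x\<^sub>1 * (t\<^sub>0 * t\<^sub>2) \<le> y\<^sub>1 * x\<^sub>0 * t\<^sub>1\<^sup>2"
    and lc\<^sub>2: "y\<^sub>1 * x\<^sub>2 * (t\<^sub>1 * t\<^sub>3) \<le> y\<^sub>2 * x\<^sub>1 * t\<^sub>2\<^sup>2"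
    and quad_x: "x\<^sub>2' * x\<^sub>0 \<le> x\<^sub>1' * x\<^sub>1"
    and quad_y: "y\<^sub>1' * y\<^sub>2 \<le> y\<^sub>2' * y\<^sub>1"
  shows "y\<^sub>1' * x\<^sub>2' * ((x\<^sub>0 * t\<^sub>1 + y\<^sub>0 * t\<^sub>0) * (x\<^sub>2 * t\<^sub>3 + y\<^sub>2 * t\<^sub>2))
           \<le> y\<^sub>2' * x\<^sub>1' * (x\<^sub>1 * t\<^sub>2 + y\<^sub>1 * t\<^sub>1)\<^sup>2"
    (is "y\<^sub>1' * x\<^sub>2' * ?ss \<le> y\<^sub>2' * x\<^sub>1' * ?s\<^sub>1\<^sup>2")
proof -
  have "(x\<^sub>1 * y\<^sub>1) * (y\<^sub>1' * x\<^sub>2' * ?ss) = (y\<^sub>1' * x\<^sub>2') * (x\<^sub>1 * y\<^sub>1 * ?ss)"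
    by (simp add: algebra_simps)
  also have "\<dots> \<le> (y\<^sub>1' * x\<^sub>2') * (x\<^sub>0 * y\<^sub>2 * ?s\<^sub>1\<^sup>2)"
    using pos nonneg lc\<^sub>1 lc\<^sub>2 by (intro mult_left_mono next_row_product_le) simp_all
  also have "\<dots> = ((x\<^sub>2' * x\<^sub>0) * (y\<^sub>1' * y\<^sub>2)) * ?s\<^sub>1\<^sup>2"
    by (simp add: algebra_simps)
  also have "\<dots> \<le> ((x\<^sub>1' * x\<^sub>1) * (y\<^sub>2' * y\<^sub>1)) * ?s\<^sub>1\<^sup>2"
    using pos nonneg by (intro mult_right_mono mult_mono[OF quad_x quad_y]) simp_all
  also have "\<dots> = (x\<^sub>1 * y\<^sub>1) * (y\<^sub>2' * x\<^sub>1' * ?s\<^sub>1\<^sup>2)"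
    by (simp add: algebra_simps)
  finally show ?thesis
    using pos by (simp add: mult_le_cancel_left_pos)
qed

context
  fixes l :: nat and a b c a' b' c' :: real
  assumes a_nonneg: "0 \<le> a" and a'_nonneg: "0 \<le> a'" and b_nonneg: "0 \<le> b"
    and b'_lower: "- a' \<le> b'" and b'_nonpos: "b' \<le> 0"
    and sum_pos: "0 < a + b + c" and sum_pos': "0 < a' + b' + c'"
begin

abbreviation (input) "T \<equiv> Tarr l a b c a' b' c'"
abbreviation (input) "X \<equiv> weight l a b c"
abbreviation (input) "Y \<equiv> weight l a' b' c'"

lemma affine_pos: "1 \<le> n \<Longrightarrow> 1 \<le> k \<Longrightarrow> 0 < a * real n + b * real_of_int k + c"
  using affine_ge_at_one[OF a_nonneg b_nonneg] sum_pos by fastforce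

lemma affine_pos': "1 \<le> n \<Longrightarrow> k \<le> int n \<Longrightarrow> 0 < a' * real n + b' * real_of_int k + c'"
  using affine_ge_at_one_diagonal[of a' b'] b'_lower b'_nonpos sum_pos' by fastforce

lemma X_pos: "1 \<le> n \<Longrightarrow> 1 \<le> k \<Longrightarrow> 0 < X n k"
  unfolding weight_def using affine_pos by simp

lemma Y_pos: "1 \<le> n \<Longrightarrow> k \<le> int n \<Longrightarrow> 0 < Y n k"
  unfolding weight_def using affine_pos' by simp

lemma Tarr_nonneg: "0 \<le> T n k"
proof (induction n arbitrary: k)
  case (Suc n)
  show ?case
  proof (cases "n \<ge> 1 \<and> 1 \<le> k \<and> k \<le> int (Suc n)")
    case True
    then show ?thesis
      using X_pos Y_pos Suc.IH by (simp add: Tarr_Suc less_imp_le)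
  next
    case False
    then show ?thesis
      by (cases "n = 0") (auto simp: Tarr_eq_0)
  qed
qed simp

lemma Tarr_pos: "1 \<le> k \<Longrightarrow> k \<le> int n \<Longrightarrow> 0 < T n k"
proof (induction n arbitrary: k)
  case (Suc n)
  show ?case
  proof (cases "n = 0")
    case False
    have "0 < X (Suc n) k * T n k + Y (Suc n) k * T n (k - 1)"
    proof (cases "k \<le> int n")
      case True
      then show ?thesis
        using Suc X_pos Y_pos Tarr_nonneg by (simp add: add_pos_nonneg less_imp_le)
    next
      case False
      then have "k - 1 = int n" using Suc.prems by simp
      then show ?thesis
        using Suc X_pos Y_pos Tarr_nonneg \<open>n \<noteq> 0\<close> by (simp add: add_nonneg_pos less_imp_le)
    qed
    then show ?thesis using False by (simp add: Tarr_Suc)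
  qed (use Suc.prems in simp)
qed simp

text \<open>Since \<open>X\<close> increases and \<open>Y\<close> decreases in \<open>k\<close>, this strengthens log-concavity of row \<open>m\<close>;
  unlike plain log-concavity, it is preserved by the recurrence.\<close>

definition weighted_lc :: "nat \<Rightarrow> int \<Rightarrow> bool" where
  "weighted_lc m k \<longleftrightarrow>
     Y (Suc m) k * X (Suc m) (k + 1) * (T m (k - 1) * T m (k + 1))
       \<le> Y (Suc m) (k + 1) * X (Suc m) k * (T m k)\<^sup>2"

lemma weighted_lc_if_product_eq_0:
  assumes "T m (k - 1) * T m (k + 1) = 0"
  shows "weighted_lc m k"
proof (cases "1 \<le> k \<and> k \<le> int m")
  case True
  then have "0 < Y (Suc m) (k + 1)" "0 < X (Suc m) k"
    using X_pos Y_pos by simp_all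
  then show ?thesis
    unfolding weighted_lc_def assms by simp
next
  case False
  then have "T m k = 0"
    by (intro Tarr_eq_0) auto
  then show ?thesis
    unfolding weighted_lc_def assms by simp
qed

lemma weighted_lc_Suc:
  assumes m: "1 \<le> m" and lc: "\<And>k. weighted_lc m k"
  shows "weighted_lc (Suc m) k"
proof (cases "T (Suc m) (k - 1) * T (Suc m) (k + 1) = 0")
  case True
  then show ?thesis by (rule weighted_lc_if_product_eq_0)
next
  case False
  then have k: "2 \<le> k" "k \<le> int m"
    using Tarr_neq_0_imp_bounds[of l a b c a' b' c' "Suc m" "k - 1"]
      Tarr_neq_0_imp_bounds[of l a b c a' b' c' "Suc m" "k + 1"] by auto
  have lc\<^sub>1: "Y (Suc m) (k - 1) * X (Suc m) k * (T m (k - 1 - 1) * T m k)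
      \<le> Y (Suc m) k * X (Suc m) (k - 1) * (T m (k - 1))\<^sup>2"
    using lc[of "k - 1"] unfolding weighted_lc_def by simp
  have lc\<^sub>2: "Y (Suc m) k * X (Suc m) (k + 1) * (T m (k - 1) * T m (k + 1))
      \<le> Y (Suc m) (k + 1) * X (Suc m) k * (T m k)\<^sup>2"
    using lc[of k] unfolding weighted_lc_def .
  have quad_x: "X (Suc (Suc m)) (k + 1) * X (Suc m) (k - 1) \<le> X (Suc (Suc m)) k * X (Suc m) k"
    using k affine_pos[of "Suc m" "k - 1"] a_nonneg b_nonneg
    by (intro weight_quadrilateral_nonneg_b) simp_all
  have quad_y: "Y (Suc (Suc m)) k * Y (Suc m) (k + 1) \<le> Y (Suc (Suc m)) (k + 1) * Y (Suc m) k"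
    using k affine_pos'[of "Suc m" "k + 1"] a'_nonneg b'_nonpos
    by (intro weight_quadrilateral_nonpos_b) simp_all
  have "Y (Suc (Suc m)) k * X (Suc (Suc m)) (k + 1) *
        ((X (Suc m) (k - 1) * T m (k - 1) + Y (Suc m) (k - 1) * T m (k - 1 - 1)) *
         (X (Suc m) (k + 1) * T m (k + 1) + Y (Suc m) (k + 1) * T m k))
      \<le> Y (Suc (Suc m)) (k + 1) * X (Suc (Suc m)) k *
        (X (Suc m) k * T m k + Y (Suc m) k * T m (k - 1))\<^sup>2"
    using k m lc\<^sub>1 lc\<^sub>2 quad_x quad_y
    by (intro next_row_weighted_lc)
      (simp_all add: Tarr_pos Tarr_nonneg X_pos Y_pos less_imp_le)
  then show ?thesis
    unfolding weighted_lc_def using m by (simp add: Tarr_Suc algebra_simps)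
qed

lemma weighted_lc_holds: "1 \<le> m \<Longrightarrow> weighted_lc m k"
proof (induction m arbitrary: k rule: nat_induct_at_least)
  case base
  then show ?case by (intro weighted_lc_if_product_eq_0) simp
next
  case (Suc m)
  then show ?case by (intro weighted_lc_Suc)
qed

lemma Tarr_log_concave_if_sums_pos:
  assumes n: "1 \<le> n"
  shows "T n (k - 1) * T n (k + 1) \<le> (T n k)\<^sup>2"
proof (cases "1 \<le> k \<and> k \<le> int n")
  case True
  let ?w = "Y (Suc n) (k + 1) * X (Suc n) k"
  have w_pos: "0 < ?w"
    using True X_pos Y_pos by simp
  have "?w \<le> Y (Suc n) k * X (Suc n) (k + 1)"
    using True affine_pos'[of "Suc n" "k + 1"] affine_pos[of "Suc n" k] b_nonneg b'_nonpos
    by (intro mult_mono weight_antimono_nonpos_b weight_mono_nonneg_b)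
      (simp_all add: X_pos Y_pos less_imp_le)
  then have "?w * (T n (k - 1) * T n (k + 1))
      \<le> Y (Suc n) k * X (Suc n) (k + 1) * (T n (k - 1) * T n (k + 1))"
    by (intro mult_right_mono mult_nonneg_nonneg Tarr_nonneg)
  also have "\<dots> \<le> ?w * (T n k)\<^sup>2"
    using weighted_lc_holds[OF n] unfolding weighted_lc_def .
  finally show ?thesis
    using w_pos by (simp add: mult_le_cancel_left_pos)
next
  case False
  then show ?thesis by (auto simp: Tarr_eq_0)
qed

end

lemma isCont_Tarr [continuous_intros]:
  assumes "isCont A x" "isCont B x" "isCont C x" "isCont A' x" "isCont B' x" "isCont C' x"
  shows "isCont (\<lambda>e. Tarr l (A e) (B e) (C e) (A' e) (B' e) (C' e) n k) x"
proof (induction n arbitrary: k)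
  case (Suc n)
  show ?case
  proof (cases "n = 0")
    case False
    then have "1 \<le> n" by simp
    then show ?thesis
      unfolding Tarr_Suc[OF \<open>1 \<le> n\<close>] weight_def by (intro continuous_intros assms Suc.IH)
  qed simp
qed simp

theorem theorem1p4:
  fixes l n :: nat and k :: int and a b c a' b' c' :: real
  assumes "l \<ge> 1"
    and "a \<ge> 0" and "a' \<ge> 0" and "b \<ge> 0"
    and "- a' \<le> b'" and "b' \<le> 0"
    and "a + b + c \<ge> 0" and "a' + b' + c' \<ge> 0"
    and "n \<ge> 1"
  shows "(Tarr l a b c a' b' c' n k)^2 \<ge>
           Tarr l a b c a' b' c' n (k - 1) * Tarr l a b c a' b' c' n (k + 1)"
proof -
  \<comment> \<open>Shifting by \<open>-e\<close> with \<open>e < 0\<close> makes both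
    sums positive, and \<open>LIM_less_bound\<close> passes to the limit \<open>e \<rightarrow> 0\<^sup>-\<close>.\<close>
  define D where "D e = (Tarr l a b (c - e) a' b' (c' - e) n k)\<^sup>2
    - Tarr l a b (c - e) a' b' (c' - e) n (k - 1) * Tarr l a b (c - e) a' b' (c' - e) n (k + 1)"
    for e
  have "0 \<le> D e" if "e \<in> {-1<..<0}" for e
  proof -
    have "Tarr l a b (c - e) a' b' (c' - e) n (k - 1) * Tarr l a b (c - e) a' b' (c' - e) n (k + 1)
        \<le> (Tarr l a b (c - e) a' b' (c' - e) n k)\<^sup>2"
      using assms that by (intro Tarr_log_concave_if_sums_pos) auto
    then show ?thesis by (simp add: D_def)
  qed
  moreover have "isCont D 0"
    unfolding D_def by (intro continuous_intros)
  ultimately have "0 \<le> D 0"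
    using LIM_less_bound[of "-1" 0 D] by simp
  then show ?thesis by (simp add: D_def)
qed

end
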